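(* Let $A=\begin{bmatrix} 0 & J_{k_1,k_2} & X_1\\ J_{k_1,k_2} & 0 & X_2\\ X_3 & X_4 & Y\end{bmatrix}$ and $B=\begin{bmatrix} J_{k_1,k_2} & 0 & X_1\\ 0 & J_{k_1,k_2} & X_2\\ X_3 & X_4 & Y\end{bmatrix}$ be Gram mates, where $k_1,k_2>0$, $\mathbf{1}^TX_1=\mathbf{1}^TX_2$ and $X_3\mathbf{1}=X_4\mathbf{1}$. Let $R$ and $S$ be the row and column sum vectors of $A$, and conformally partitioned with the rows and the columns of $A$ as $R=(R_1,R_2,R_3)$ and $S=(S_1,S_2,S_3)$, respectively. Suppose that for $i=1,2$, the set of all entries of $R_i$ (resp. $S_i$) does not have any element in common with that of $R_3$ (resp. $S_3$). Then, $A$ is isomorphic to $B$ if and only if the remaining matrix $Y$ is fixable.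
   Context: $J_{p,q}$ is the $p\times q$ all-ones matrix. Two $(0,1)$ matrices $A\neq B$ are Gram mates if $AA^T=BB^T$ and $A^TA=B^TB$; isomorphic if $B=PAQ$ for permutation matrices $P,Q$. For $(0,1)$ matrices $Z_1,Z_2$ of equal size, $\mathcal R_{Z_1,Z_2}$ is the set of triples $(P_1,P_2,Q)$ of permutation matrices with $Z_2=P_1Z_1Q$ and $Z_1=P_2Z_2Q$, and $\mathcal L_{Z_1,Z_2}$ is the set of triples $(P,Q_1,Q_2)$ of permutation matrices with $Z_1=PZ_1Q_1$ and $Z_2=PZ_2Q_2$. $Y$ is fixable if there exist permutation matrices $P,Q$ with $Y=PYQ$ such that either (i) $(P_1,P_2,Q)\in\mathcal R_{X_1,X_2}$ and $(P,Q_3,Q_4)\in\mathcal L_{X_3,X_4}$ for some $P_1,P_2,Q_3,Q_4$, or (ii) $(Q_3,Q_4,P^T)\in\mathcal R_{X_3^T,X_4^T}$ and $(Q^T,P_1,P_2)\in\mathcal L_{X_1^T,X_2^T}$ for some $P_1,P_2,Q_3,Q_4$. *)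

theory Defs
  imports "Jordan_Normal_Form.Matrix" "HOL-Combinatorics.Permutations"
begin

definition all_ones_mat :: "nat \<Rightarrow> nat \<Rightarrow> int mat" where
  "all_ones_mat p q = mat p q (\<lambda>_. 1)"

definition zero_one_mat :: "int mat \<Rightarrow> bool" where
  "zero_one_mat M \<longleftrightarrow> (\<forall>i < dim_row M. \<forall>j < dim_col M. M $$ (i,j) \<in> {0,1})"

definition perm_mat :: "nat \<Rightarrow> int mat \<Rightarrow> bool" where
  "perm_mat n P \<longleftrightarrow> (\<exists>p. p permutes {..<n} \<and>
      P = mat n n (\<lambda>(i,j). if p i = j then 1 else 0))"

text \<open>3 x 3 block matrix; row-block sizes are read off the first block column,
  column-block sizes off the first block row.\<close>
definition block3 :: "int mat \<Rightarrow> int mat \<Rightarrow> int mat \<Rightarrow> int mat \<Rightarrow> int mat \<Rightarrow> int mat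
    \<Rightarrow> int mat \<Rightarrow> int mat \<Rightarrow> int mat \<Rightarrow> int mat" where
  "block3 M11 M12 M13 M21 M22 M23 M31 M32 M33 =
    (let r1 = dim_row M11; r2 = dim_row M21; r3 = dim_row M31;
         c1 = dim_col M11; c2 = dim_col M12; c3 = dim_col M13;
         pick = (\<lambda>i j. if i < r1 then (if j < c1 then M11 $$ (i,j)
                                     else if j < c1 + c2 then M12 $$ (i, j - c1)
                                     else M13 $$ (i, j - c1 - c2))
                       else if i < r1 + r2 then
                                    (if j < c1 then M21 $$ (i - r1, j)
                                     else if j < c1 + c2 then M22 $$ (i - r1, j - c1)
                                     else M23 $$ (i - r1, j - c1 - c2))
                       else (if j < c1 then M31 $$ (i - r1 - r2, j)
                                     else if j < c1 + c2 then M32 $$ (i - r1 - r2, j - c1)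
                                     else M33 $$ (i - r1 - r2, j - c1 - c2)))
     in mat (r1 + r2 + r3) (c1 + c2 + c3) (\<lambda>(i,j). pick i j))"

definition gram_mates :: "int mat \<Rightarrow> int mat \<Rightarrow> bool" where
  "gram_mates A B \<longleftrightarrow> zero_one_mat A \<and> zero_one_mat B \<and>
     dim_row A = dim_row B \<and> dim_col A = dim_col B \<and> A \<noteq> B \<and>
     A * transpose_mat A = B * transpose_mat B \<and>
     transpose_mat A * A = transpose_mat B * B"

definition isomorphic_mat :: "int mat \<Rightarrow> int mat \<Rightarrow> bool" where
  "isomorphic_mat A B \<longleftrightarrow> (\<exists>P Q. perm_mat (dim_row A) P \<and> perm_mat (dim_col A) Q \<and>
      B = P * A * Q)"

definition R_set :: "int mat \<Rightarrow> int mat \<Rightarrow> (int mat \<times> int mat \<times> int mat) set" where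
  "R_set Z1 Z2 = {(P1, P2, Q). perm_mat (dim_row Z1) P1 \<and> perm_mat (dim_row Z1) P2 \<and>
      perm_mat (dim_col Z1) Q \<and> Z2 = P1 * Z1 * Q \<and> Z1 = P2 * Z2 * Q}"

definition L_set :: "int mat \<Rightarrow> int mat \<Rightarrow> (int mat \<times> int mat \<times> int mat) set" where
  "L_set Z1 Z2 = {(P, Q1, Q2). perm_mat (dim_row Z1) P \<and> perm_mat (dim_col Z1) Q1 \<and>
      perm_mat (dim_col Z1) Q2 \<and> Z1 = P * Z1 * Q1 \<and> Z2 = P * Z2 * Q2}"

definition fixable :: "int mat \<Rightarrow> int mat \<Rightarrow> int mat \<Rightarrow> int mat \<Rightarrow> int mat \<Rightarrow> bool" where
  "fixable X1 X2 X3 X4 Y \<longleftrightarrow> (\<exists>P Q. perm_mat (dim_row Y) P \<and> perm_mat (dim_col Y) Q \<and>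
      Y = P * Y * Q \<and>
      ((\<exists>P1 P2 Q3 Q4. (P1, P2, Q) \<in> R_set X1 X2 \<and> (P, Q3, Q4) \<in> L_set X3 X4) \<or>
       (\<exists>P1 P2 Q3 Q4. (Q3, Q4, transpose_mat P) \<in> R_set (transpose_mat X3) (transpose_mat X4) \<and>
                      (transpose_mat Q, P1, P2) \<in> L_set (transpose_mat X1) (transpose_mat X2))))"

definition row_sum :: "int mat \<Rightarrow> nat \<Rightarrow> int" where
  "row_sum M i = (\<Sum>j < dim_col M. M $$ (i,j))"

definition col_sum :: "int mat \<Rightarrow> nat \<Rightarrow> int" where
  "col_sum M j = (\<Sum>i < dim_row M. M $$ (i,j))"

end

theory Submission
  imports Defs
begin

text \<open>An isomorphism \<open>B = P A Q\<close> amounts to permutations \<open>\<rho>, \<mu>\<close> with \<open>B i j = A (\<rho> i) (\<mu> j)\<close>.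
  Gram mates have the same row and column sums, so \<open>\<rho>\<close> preserves the row sums of \<open>A\<close> and \<open>\<mu>\<close> its
  column sums; by the disjointness hypotheses \<open>\<rho>\<close> and \<open>\<mu>\<close> map the last row block and the last
  column block onto themselves. In the leading \<open>2 \<times> 2\<close> blocks \<open>A\<close> carries \<open>J\<close> off and \<open>B\<close> on the
  block diagonal, which forces exactly one of \<open>\<rho>, \<mu>\<close> to exchange its two leading blocks. Once this
  exchange is undone, \<open>\<rho>\<close> and \<open>\<mu>\<close> split into permutations of the single blocks, and the equation
  between \<open>B\<close> and the permuted \<open>A\<close> becomes blockwise exactly alternative (ii) of fixability when
  the columns are exchanged and alternative (i) when the rows are. Conversely, block permutations
  as in the definition of fixability assemble into an isomorphism.\<close>

(* HOL-Algebra's notation for group inverses would otherwise hide Hilbert_Choice.inv. *)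
unbundle no m_inv_syntax

section \<open>Permuting rows and columns\<close>

lemma permutes_lessThan_less: "\<sigma> permutes {..<n} \<Longrightarrow> i < n \<Longrightarrow> \<sigma> i < n"
  using permutes_in_image[of \<sigma> "{..<n}" i] by simp

definition permute_mat :: "(nat \<Rightarrow> nat) \<Rightarrow> (nat \<Rightarrow> nat) \<Rightarrow> 'a mat \<Rightarrow> 'a mat" where
  "permute_mat \<sigma> \<tau> A = mat (dim_row A) (dim_col A) (\<lambda>(i, j). A $$ (\<sigma> i, \<tau> j))"

lemma dim_permute_mat [simp]:
  "dim_row (permute_mat \<sigma> \<tau> A) = dim_row A" "dim_col (permute_mat \<sigma> \<tau> A) = dim_col A"
  by (simp_all add: permute_mat_def)

lemma index_permute_mat [simp]:
  "i < dim_row A \<Longrightarrow> j < dim_col A \<Longrightarrow> permute_mat \<sigma> \<tau> A $$ (i, j) = A $$ (\<sigma> i, \<tau> j)"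
  by (simp add: permute_mat_def)

lemma permute_mat_carrier [simp]: "A \<in> carrier_mat r c \<Longrightarrow> permute_mat \<sigma> \<tau> A \<in> carrier_mat r c"
  by (rule carrier_matI) auto

lemma permute_mat_comp:
  assumes "\<forall>i<dim_row A. \<rho> i < dim_row A" "\<forall>j<dim_col A. \<mu> j < dim_col A"
  shows "permute_mat (\<sigma> \<circ> \<rho>) (\<tau> \<circ> \<mu>) A = permute_mat \<rho> \<mu> (permute_mat \<sigma> \<tau> A)"
  using assms by (intro eq_matI) auto

lemma transpose_permute_mat:
  assumes "\<sigma> permutes {..<dim_row A}" "\<tau> permutes {..<dim_col A}"
  shows "transpose_mat (permute_mat \<sigma> \<tau> A) = permute_mat \<tau> \<sigma> (transpose_mat A)"
  using assms by (intro eq_matI) (auto simp: permutes_lessThan_less)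

lemma transpose_eq_permute_mat_iff:
  assumes "Z \<in> carrier_mat r c" "\<sigma> permutes {..<c}" "\<tau> permutes {..<r}"
  shows "transpose_mat W = permute_mat \<sigma> \<tau> (transpose_mat Z) \<longleftrightarrow> W = permute_mat \<tau> \<sigma> Z"
proof -
  have "transpose_mat (permute_mat \<tau> \<sigma> Z) = permute_mat \<sigma> \<tau> (transpose_mat Z)"
    using assms by (intro transpose_permute_mat) auto
  then show ?thesis
    by (metis transpose_mat_eq)
qed

lemma dim_all_ones_mat [simp]: "dim_row (all_ones_mat p q) = p" "dim_col (all_ones_mat p q) = q"
  by (simp_all add: all_ones_mat_def)

lemma all_ones_mat_carrier [simp]: "all_ones_mat p q \<in> carrier_mat p q"
  by (simp add: all_ones_mat_def)

lemma permute_mat_all_ones: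
  "\<sigma> permutes {..<p} \<Longrightarrow> \<tau> permutes {..<q} \<Longrightarrow> permute_mat \<sigma> \<tau> (all_ones_mat p q) = all_ones_mat p q"
  unfolding all_ones_mat_def by (intro eq_matI) (auto simp: permutes_lessThan_less)

lemma permute_mat_zero:
  "\<sigma> permutes {..<p} \<Longrightarrow> \<tau> permutes {..<q} \<Longrightarrow> permute_mat \<sigma> \<tau> (0\<^sub>m p q) = 0\<^sub>m p q"
  by (intro eq_matI) (auto simp: permutes_lessThan_less)

lemma row_sum_permute_mat:
  assumes "\<tau> permutes {..<dim_col A}" "i < dim_row A"
  shows "row_sum (permute_mat \<sigma> \<tau> A) i = row_sum A (\<sigma> i)"
proof -
  have "(\<Sum>j<dim_col A. A $$ (\<sigma> i, j)) = (\<Sum>j<dim_col A. A $$ (\<sigma> i, \<tau> j))"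
    using sum.permute[OF assms(1), of "\<lambda>j. A $$ (\<sigma> i, j)"] by (simp add: comp_def)
  then show ?thesis
    using assms(2) by (simp add: row_sum_def)
qed

lemma col_sum_permute_mat:
  assumes "\<sigma> permutes {..<dim_row A}" "j < dim_col A"
  shows "col_sum (permute_mat \<sigma> \<tau> A) j = col_sum A (\<tau> j)"
proof -
  have "(\<Sum>i<dim_row A. A $$ (i, \<tau> j)) = (\<Sum>i<dim_row A. A $$ (\<sigma> i, \<tau> j))"
    using sum.permute[OF assms(1), of "\<lambda>i. A $$ (i, \<tau> j)"] by (simp add: comp_def)
  then show ?thesis
    using assms(2) by (simp add: col_sum_def)
qed

section \<open>Permutation matrices\<close>

definition perm_matrix :: "nat \<Rightarrow> (nat \<Rightarrow> nat) \<Rightarrow> int mat" where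
  "perm_matrix n p = mat n n (\<lambda>(i, j). if p i = j then 1 else 0)"

lemma perm_mat_iff: "perm_mat n P \<longleftrightarrow> (\<exists>p. p permutes {..<n} \<and> P = perm_matrix n p)"
  by (simp add: perm_mat_def perm_matrix_def)

lemma perm_mat_iff_inv: "perm_mat n P \<longleftrightarrow> (\<exists>p. p permutes {..<n} \<and> P = perm_matrix n (inv p))"
  unfolding perm_mat_iff
proof
  assume "\<exists>p. p permutes {..<n} \<and> P = perm_matrix n p"
  then obtain p where "p permutes {..<n}" "P = perm_matrix n p" by blast
  then show "\<exists>p. p permutes {..<n} \<and> P = perm_matrix n (inv p)"
    by (intro exI[of _ "inv p"]) (simp add: permutes_inv permutes_inv_inv)
qed (blast intro: permutes_inv)

lemma perm_mat_perm_matrix [simp]: "p permutes {..<n} \<Longrightarrow> perm_mat n (perm_matrix n p)"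
  unfolding perm_mat_iff by blast

lemma dim_perm_matrix [simp]:
  "dim_row (perm_matrix n p) = n" "dim_col (perm_matrix n p) = n"
  by (simp_all add: perm_matrix_def)

lemma perm_matrix_mult:
  assumes p: "p permutes {..<r}" and A: "A \<in> carrier_mat r c"
  shows "perm_matrix r p * A = permute_mat p id A"
proof (rule eq_matI)
  fix i j assume "i < dim_row (permute_mat p id A)" "j < dim_col (permute_mat p id A)"
  then have i: "i < r" and j: "j < c" using A by auto
  have "(perm_matrix r p * A) $$ (i, j) = (\<Sum>l<r. (if p i = l then 1 else 0) * A $$ (l, j))"
    using i j A by (simp add: perm_matrix_def scalar_prod_def atLeast0LessThan)
  also have "\<dots> = (\<Sum>l<r. if p i = l then A $$ (l, j) else 0)"
    by (rule sum.cong) auto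
  also have "\<dots> = A $$ (p i, j)"
    using permutes_lessThan_less[OF p i] by simp
  finally show "(perm_matrix r p * A) $$ (i, j) = permute_mat p id A $$ (i, j)"
    using i j A by simp
qed (use A in auto)

lemma mult_perm_matrix:
  assumes q: "q permutes {..<c}" and A: "A \<in> carrier_mat r c"
  shows "A * perm_matrix c q = permute_mat id (inv q) A"
proof (rule eq_matI)
  fix i j assume "i < dim_row (permute_mat id (inv q) A)" "j < dim_col (permute_mat id (inv q) A)"
  then have i: "i < r" and j: "j < c" using A by auto
  have "(A * perm_matrix c q) $$ (i, j) = (\<Sum>l<c. A $$ (i, l) * (if q l = j then 1 else 0))"
    using i j A by (simp add: perm_matrix_def scalar_prod_def atLeast0LessThan)
  also have "\<dots> = (\<Sum>l<c. if l = inv q j then A $$ (i, l) else 0)"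
  proof (rule sum.cong[OF refl])
    fix l
    have "q l = j \<longleftrightarrow> l = inv q j"
      using permutes_inv_eq[OF q, of j l] by auto
    then show "A $$ (i, l) * (if q l = j then 1 else 0) = (if l = inv q j then A $$ (i, l) else 0)"
      by simp
  qed
  also have "\<dots> = A $$ (i, inv q j)"
    using permutes_lessThan_less[OF permutes_inv[OF q] j] by simp
  finally show "(A * perm_matrix c q) $$ (i, j) = permute_mat id (inv q) A $$ (i, j)"
    using i j A by simp
qed (use A in auto)

lemma perm_matrix_mult_mult:
  assumes p: "p permutes {..<r}" and q: "q permutes {..<c}" and A: "A \<in> carrier_mat r c"
  shows "perm_matrix r p * A * perm_matrix c q = permute_mat p (inv q) A"
proof -
  have "permute_mat p id A \<in> carrier_mat r c"
    using A by (intro carrier_matI) auto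
  then have "perm_matrix r p * A * perm_matrix c q = permute_mat id (inv q) (permute_mat p id A)"
    by (simp add: perm_matrix_mult[OF p A] mult_perm_matrix[OF q])
  also have "\<dots> = permute_mat p (inv q) A"
    using A p q by (intro eq_matI) (auto simp: permutes_lessThan_less permutes_inv)
  finally show ?thesis .
qed

lemma transpose_perm_matrix:
  "p permutes {..<n} \<Longrightarrow> transpose_mat (perm_matrix n p) = perm_matrix n (inv p)"
  unfolding perm_matrix_def by (intro eq_matI) (auto simp: permutes_inv_eq)

lemma isomorphic_mat_iff_permute_mat:
  assumes A: "A \<in> carrier_mat r c"
  shows "isomorphic_mat A B \<longleftrightarrow>
    (\<exists>\<sigma> \<tau>. \<sigma> permutes {..<r} \<and> \<tau> permutes {..<c} \<and> B = permute_mat \<sigma> \<tau> A)"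
proof
  assume "isomorphic_mat A B"
  then obtain P Q where "perm_mat r P" "perm_mat c Q" "B = P * A * Q"
    using A by (auto simp: isomorphic_mat_def)
  then obtain \<sigma> \<tau> where "\<sigma> permutes {..<r}" "\<tau> permutes {..<c}"
    and "B = perm_matrix r \<sigma> * A * perm_matrix c (inv \<tau>)"
    unfolding perm_mat_iff[of r] perm_mat_iff_inv[of c] by blast
  then show "\<exists>\<sigma> \<tau>. \<sigma> permutes {..<r} \<and> \<tau> permutes {..<c} \<and> B = permute_mat \<sigma> \<tau> A"
    using A by (auto simp: perm_matrix_mult_mult permutes_inv permutes_inv_inv)
next
  assume "\<exists>\<sigma> \<tau>. \<sigma> permutes {..<r} \<and> \<tau> permutes {..<c} \<and> B = permute_mat \<sigma> \<tau> A"
  then obtain \<sigma> \<tau> where \<sigma>: "\<sigma> permutes {..<r}" and \<tau>: "\<tau> permutes {..<c}"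
    and "B = permute_mat \<sigma> \<tau> A"
    by blast
  then have "B = perm_matrix r \<sigma> * A * perm_matrix c (inv \<tau>)"
    using A by (simp add: perm_matrix_mult_mult permutes_inv permutes_inv_inv)
  then show "isomorphic_mat A B"
    using A \<sigma> \<tau> unfolding isomorphic_mat_def by (auto intro!: exI simp: permutes_inv)
qed

lemma perm_matrices_in_R_set_iff:
  assumes "Z1 \<in> carrier_mat r c" "Z2 \<in> carrier_mat r c"
    and "\<alpha> permutes {..<r}" "\<beta> permutes {..<r}" "\<tau> permutes {..<c}"
  shows "(perm_matrix r \<alpha>, perm_matrix r \<beta>, perm_matrix c (inv \<tau>)) \<in> R_set Z1 Z2 \<longleftrightarrow>
    Z2 = permute_mat \<alpha> \<tau> Z1 \<and> Z1 = permute_mat \<beta> \<tau> Z2"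
  using assms by (simp add: R_set_def perm_matrix_mult_mult permutes_inv permutes_inv_inv)

lemma perm_matrices_in_L_set_iff:
  assumes "Z1 \<in> carrier_mat r c" "Z2 \<in> carrier_mat r c"
    and "\<sigma> permutes {..<r}" "\<gamma> permutes {..<c}" "\<delta> permutes {..<c}"
  shows "(perm_matrix r \<sigma>, perm_matrix c (inv \<gamma>), perm_matrix c (inv \<delta>)) \<in> L_set Z1 Z2 \<longleftrightarrow>
    Z1 = permute_mat \<sigma> \<gamma> Z1 \<and> Z2 = permute_mat \<sigma> \<delta> Z2"
  using assms by (simp add: L_set_def perm_matrix_mult_mult permutes_inv permutes_inv_inv)

definition fixable_perm :: "int mat \<Rightarrow> int mat \<Rightarrow> int mat \<Rightarrow> int mat \<Rightarrow> int mat \<Rightarrow> bool" where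
  "fixable_perm X1 X2 X3 X4 Y \<longleftrightarrow>
    (\<exists>\<sigma> \<tau> \<alpha> \<beta> \<gamma> \<delta>. \<sigma> permutes {..<dim_row Y} \<and> \<tau> permutes {..<dim_col Y} \<and>
      \<alpha> permutes {..<dim_row X1} \<and> \<beta> permutes {..<dim_row X1} \<and>
      \<gamma> permutes {..<dim_col X3} \<and> \<delta> permutes {..<dim_col X3} \<and> Y = permute_mat \<sigma> \<tau> Y \<and>
      (X1 = permute_mat \<alpha> \<tau> X2 \<and> X2 = permute_mat \<beta> \<tau> X1 \<and>
       X3 = permute_mat \<sigma> \<gamma> X3 \<and> X4 = permute_mat \<sigma> \<delta> X4 \<or>
       X1 = permute_mat \<alpha> \<tau> X1 \<and> X2 = permute_mat \<beta> \<tau> X2 \<and>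
       X3 = permute_mat \<sigma> \<gamma> X4 \<and> X4 = permute_mat \<sigma> \<delta> X3))"

lemma R_set_L_set_perm_matrices_iff:
  assumes X: "X1 \<in> carrier_mat k1 n" "X2 \<in> carrier_mat k1 n" "X3 \<in> carrier_mat m k2" "X4 \<in> carrier_mat m k2"
    and perms: "\<sigma> permutes {..<m}" "\<tau> permutes {..<n}" "\<alpha> permutes {..<k1}" "\<beta> permutes {..<k1}"
      "\<gamma> permutes {..<k2}" "\<delta> permutes {..<k2}"
  shows "(perm_matrix k1 \<beta>, perm_matrix k1 \<alpha>, perm_matrix n (inv \<tau>)) \<in> R_set X1 X2 \<and>
      (perm_matrix m \<sigma>, perm_matrix k2 (inv \<gamma>), perm_matrix k2 (inv \<delta>)) \<in> L_set X3 X4 \<longleftrightarrow>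
    X1 = permute_mat \<alpha> \<tau> X2 \<and> X2 = permute_mat \<beta> \<tau> X1 \<and>
    X3 = permute_mat \<sigma> \<gamma> X3 \<and> X4 = permute_mat \<sigma> \<delta> X4"
  using perms
  by (simp add: perm_matrices_in_R_set_iff[OF X(1,2)] perm_matrices_in_L_set_iff[OF X(3,4)] conj_ac)

lemma R_set_L_set_transpose_perm_matrices_iff:
  assumes X: "X1 \<in> carrier_mat k1 n" "X2 \<in> carrier_mat k1 n" "X3 \<in> carrier_mat m k2" "X4 \<in> carrier_mat m k2"
    and perms: "\<sigma> permutes {..<m}" "\<tau> permutes {..<n}" "\<alpha> permutes {..<k1}" "\<beta> permutes {..<k1}"
      "\<gamma> permutes {..<k2}" "\<delta> permutes {..<k2}"
  shows "(perm_matrix k2 \<delta>, perm_matrix k2 \<gamma>, transpose_mat (perm_matrix m \<sigma>))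
        \<in> R_set (transpose_mat X3) (transpose_mat X4) \<and>
      (transpose_mat (perm_matrix n (inv \<tau>)), perm_matrix k1 (inv \<alpha>), perm_matrix k1 (inv \<beta>))
        \<in> L_set (transpose_mat X1) (transpose_mat X2) \<longleftrightarrow>
    X1 = permute_mat \<alpha> \<tau> X1 \<and> X2 = permute_mat \<beta> \<tau> X2 \<and>
    X3 = permute_mat \<sigma> \<gamma> X4 \<and> X4 = permute_mat \<sigma> \<delta> X3"
proof -
  have XT: "transpose_mat X1 \<in> carrier_mat n k1" "transpose_mat X2 \<in> carrier_mat n k1"
    "transpose_mat X3 \<in> carrier_mat k2 m" "transpose_mat X4 \<in> carrier_mat k2 m"
    using X by auto
  show ?thesis
    using perms perm_matrices_in_R_set_iff[OF XT(3,4)] perm_matrices_in_L_set_iff[OF XT(1,2)]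
      transpose_eq_permute_mat_iff[OF X(3)] transpose_eq_permute_mat_iff[OF X(4)]
      transpose_eq_permute_mat_iff[OF X(1)] transpose_eq_permute_mat_iff[OF X(2)]
    by (simp add: transpose_perm_matrix permutes_inv permutes_inv_inv conj_ac)
qed

lemma fixable_imp_fixable_perm:
  assumes X: "X1 \<in> carrier_mat k1 n" "X2 \<in> carrier_mat k1 n" "X3 \<in> carrier_mat m k2"
      "X4 \<in> carrier_mat m k2" "Y \<in> carrier_mat m n"
    and "fixable X1 X2 X3 X4 Y"
  shows "fixable_perm X1 X2 X3 X4 Y"
proof -
  have dims: "dim_row Y = m" "dim_col Y = n" "dim_row X1 = k1" "dim_col X3 = k2"
    "dim_col (transpose_mat X1) = k1" "dim_row (transpose_mat X3) = k2"
    using X by auto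
  obtain P Q where "perm_mat m P" "perm_mat n Q" and Y_PQ: "Y = P * Y * Q"
    and alt: "(\<exists>P1 P2 Q3 Q4. (P1, P2, Q) \<in> R_set X1 X2 \<and> (P, Q3, Q4) \<in> L_set X3 X4) \<or>
      (\<exists>P1 P2 Q3 Q4. (Q3, Q4, transpose_mat P) \<in> R_set (transpose_mat X3) (transpose_mat X4) \<and>
        (transpose_mat Q, P1, P2) \<in> L_set (transpose_mat X1) (transpose_mat X2))"
    using assms(6) unfolding fixable_def dims by blast
  then obtain \<sigma> \<tau> where \<sigma>: "\<sigma> permutes {..<m}" and \<tau>: "\<tau> permutes {..<n}"
    and P: "P = perm_matrix m \<sigma>" and Q: "Q = perm_matrix n (inv \<tau>)"
    unfolding perm_mat_iff[of m] perm_mat_iff_inv[of n] by blast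
  have "P * Y * Q = permute_mat \<sigma> \<tau> Y"
    using X(5) \<sigma> \<tau> by (simp add: P Q perm_matrix_mult_mult permutes_inv permutes_inv_inv)
  with Y_PQ have Y_eq: "Y = permute_mat \<sigma> \<tau> Y"
    by (rule trans)
  from alt show ?thesis
  proof (elim disjE exE conjE)
    fix P1 P2 Q3 Q4 assume R: "(P1, P2, Q) \<in> R_set X1 X2" and L: "(P, Q3, Q4) \<in> L_set X3 X4"
    have "perm_mat k1 P1" "perm_mat k1 P2" "perm_mat k2 Q3" "perm_mat k2 Q4"
      using R L unfolding R_set_def L_set_def dims by blast+
    then obtain \<alpha> \<beta> \<gamma> \<delta> where perms: "\<alpha> permutes {..<k1}" "\<beta> permutes {..<k1}"
      "\<gamma> permutes {..<k2}" "\<delta> permutes {..<k2}"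
      and "P1 = perm_matrix k1 \<beta>" "P2 = perm_matrix k1 \<alpha>"
      "Q3 = perm_matrix k2 (inv \<gamma>)" "Q4 = perm_matrix k2 (inv \<delta>)"
      unfolding perm_mat_iff[of k1] perm_mat_iff_inv[of k2] by blast
    with R L P Q R_set_L_set_perm_matrices_iff[OF X(1-4) \<sigma> \<tau> perms]
    show ?thesis
      unfolding fixable_perm_def dims using \<sigma> \<tau> Y_eq by blast
  next
    fix P1 P2 Q3 Q4
    assume R: "(Q3, Q4, transpose_mat P) \<in> R_set (transpose_mat X3) (transpose_mat X4)"
      and L: "(transpose_mat Q, P1, P2) \<in> L_set (transpose_mat X1) (transpose_mat X2)"
    have "perm_mat k1 P1" "perm_mat k1 P2" "perm_mat k2 Q3" "perm_mat k2 Q4"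
      using R L unfolding R_set_def L_set_def dims by blast+
    then obtain \<alpha> \<beta> \<gamma> \<delta> where perms: "\<alpha> permutes {..<k1}" "\<beta> permutes {..<k1}"
      "\<gamma> permutes {..<k2}" "\<delta> permutes {..<k2}"
      and "P1 = perm_matrix k1 (inv \<alpha>)" "P2 = perm_matrix k1 (inv \<beta>)"
      "Q3 = perm_matrix k2 \<delta>" "Q4 = perm_matrix k2 \<gamma>"
      unfolding perm_mat_iff[of k2] perm_mat_iff_inv[of k1] by blast
    with R L P Q R_set_L_set_transpose_perm_matrices_iff[OF X(1-4) \<sigma> \<tau> perms]
    show ?thesis
      unfolding fixable_perm_def dims using \<sigma> \<tau> Y_eq by blast
  qed
qed

lemma fixable_perm_imp_fixable:
  assumes X: "X1 \<in> carrier_mat k1 n" "X2 \<in> carrier_mat k1 n" "X3 \<in> carrier_mat m k2"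
      "X4 \<in> carrier_mat m k2" "Y \<in> carrier_mat m n"
    and "fixable_perm X1 X2 X3 X4 Y"
  shows "fixable X1 X2 X3 X4 Y"
proof -
  have dims: "dim_row Y = m" "dim_col Y = n" "dim_row X1 = k1" "dim_col X3 = k2"
    using X by auto
  obtain \<sigma> \<tau> \<alpha> \<beta> \<gamma> \<delta> where perms: "\<sigma> permutes {..<m}" "\<tau> permutes {..<n}"
      "\<alpha> permutes {..<k1}" "\<beta> permutes {..<k1}" "\<gamma> permutes {..<k2}" "\<delta> permutes {..<k2}"
    and Y_eq: "Y = permute_mat \<sigma> \<tau> Y"
    and alt: "X1 = permute_mat \<alpha> \<tau> X2 \<and> X2 = permute_mat \<beta> \<tau> X1 \<and>
        X3 = permute_mat \<sigma> \<gamma> X3 \<and> X4 = permute_mat \<sigma> \<delta> X4 \<or>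
      X1 = permute_mat \<alpha> \<tau> X1 \<and> X2 = permute_mat \<beta> \<tau> X2 \<and>
        X3 = permute_mat \<sigma> \<gamma> X4 \<and> X4 = permute_mat \<sigma> \<delta> X3"
    using assms(6) unfolding fixable_perm_def dims by blast
  have "perm_matrix m \<sigma> * Y * perm_matrix n (inv \<tau>) = permute_mat \<sigma> \<tau> Y"
    using X(5) perms by (simp add: perm_matrix_mult_mult permutes_inv permutes_inv_inv)
  then have "Y = perm_matrix m \<sigma> * Y * perm_matrix n (inv \<tau>)"
    by (simp only: Y_eq[symmetric])
  moreover have "perm_mat m (perm_matrix m \<sigma>)" "perm_mat n (perm_matrix n (inv \<tau>))"
    using perms by (simp_all add: permutes_inv)
  moreover note R_set_L_set_perm_matrices_iff[OF X(1-4) perms]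
    R_set_L_set_transpose_perm_matrices_iff[OF X(1-4) perms]
  ultimately show ?thesis
    using alt unfolding fixable_def dims by blast
qed

lemma fixable_iff_fixable_perm:
  assumes "X1 \<in> carrier_mat k1 n" "X2 \<in> carrier_mat k1 n" "X3 \<in> carrier_mat m k2"
    "X4 \<in> carrier_mat m k2" "Y \<in> carrier_mat m n"
  shows "fixable X1 X2 X3 X4 Y \<longleftrightarrow> fixable_perm X1 X2 X3 X4 Y"
  using fixable_imp_fixable_perm[OF assms] fixable_perm_imp_fixable[OF assms] by blast

section \<open>Row and column sums of Gram mates\<close>

lemma zero_one_mat_square_entry:
  "zero_one_mat M \<Longrightarrow> i < dim_row M \<Longrightarrow> j < dim_col M \<Longrightarrow> M $$ (i, j) * M $$ (i, j) = M $$ (i, j)"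
  unfolding zero_one_mat_def by fastforce

lemma diag_mult_transpose_mat:
  assumes "zero_one_mat M" "i < dim_row M"
  shows "(M * transpose_mat M) $$ (i, i) = row_sum M i"
proof -
  have "(M * transpose_mat M) $$ (i, i) = (\<Sum>j<dim_col M. M $$ (i, j) * M $$ (i, j))"
    using assms(2) by (simp add: scalar_prod_def atLeast0LessThan)
  also have "\<dots> = row_sum M i"
    unfolding row_sum_def using zero_one_mat_square_entry[OF assms] by (intro sum.cong) auto
  finally show ?thesis .
qed

lemma diag_transpose_mat_mult:
  assumes "zero_one_mat M" "j < dim_col M"
  shows "(transpose_mat M * M) $$ (j, j) = col_sum M j"
proof -
  have "(transpose_mat M * M) $$ (j, j) = (\<Sum>i<dim_row M. M $$ (i, j) * M $$ (i, j))"
    using assms(2) by (simp add: scalar_prod_def atLeast0LessThan)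
  also have "\<dots> = col_sum M j"
    unfolding col_sum_def using zero_one_mat_square_entry[OF assms(1) _ assms(2)] by (intro sum.cong) auto
  finally show ?thesis .
qed

lemma gram_mates_permute_mat_row_sum:
  assumes "gram_mates A B" "B = permute_mat \<sigma> \<tau> A" "\<tau> permutes {..<dim_col A}" "i < dim_row A"
  shows "row_sum A (\<sigma> i) = row_sum A i"
proof -
  have "row_sum B i = row_sum A i"
    using assms(1,4) diag_mult_transpose_mat[of A i] diag_mult_transpose_mat[of B i]
    by (auto simp: gram_mates_def)
  then show ?thesis
    using row_sum_permute_mat[OF assms(3,4)] assms(2) by simp
qed

lemma gram_mates_permute_mat_col_sum:
  assumes "gram_mates A B" "B = permute_mat \<sigma> \<tau> A" "\<sigma> permutes {..<dim_row A}" "j < dim_col A"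
  shows "col_sum A (\<tau> j) = col_sum A j"
proof -
  have "col_sum B j = col_sum A j"
    using assms(1,4) diag_transpose_mat_mult[of A j] diag_transpose_mat_mult[of B j]
    by (auto simp: gram_mates_def)
  then show ?thesis
    using col_sum_permute_mat[OF assms(3,4)] assms(2) by simp
qed

lemma permutes_less_iff_if_disjoint_values:
  fixes \<sigma> :: "nat \<Rightarrow> nat"
  assumes \<sigma>: "\<sigma> permutes {..<n}" and same: "\<forall>i<n. f (\<sigma> i) = f i"
    and disjoint: "f ` {..<k} \<inter> f ` {k..<n} = {}" and i: "i < n"
  shows "\<sigma> i < k \<longleftrightarrow> i < k"
proof -
  have "\<sigma> i < n" and "f (\<sigma> i) = f i"
    using permutes_lessThan_less[OF \<sigma> i] same i by auto
  then have "f i \<in> f ` {..<k}" if "\<sigma> i < k \<or> i < k"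
    using that by (auto intro: rev_image_eqI)
  moreover have "f i \<in> f ` {k..<n}" if "\<not> \<sigma> i < k \<or> \<not> i < k"
  proof -
    have "\<sigma> i \<in> {k..<n} \<or> i \<in> {k..<n}"
      using that i \<open>\<sigma> i < n\<close> by auto
    then show ?thesis
      using \<open>f (\<sigma> i) = f i\<close> by (auto intro: rev_image_eqI)
  qed
  ultimately show ?thesis
    using disjoint by blast
qed

lemma gram_mates_permute_mat_row_less_iff:
  assumes "gram_mates A B" "B = permute_mat \<rho> \<mu> A"
    and "\<rho> permutes {..<dim_row A}" "\<mu> permutes {..<dim_col A}"
    and "row_sum A ` {..<k} \<inter> row_sum A ` {k..<dim_row A} = {}"
  shows "\<forall>i<dim_row A. \<rho> i < k \<longleftrightarrow> i < k"
  using permutes_less_iff_if_disjoint_values[OF assms(3) _ assms(5)]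
    gram_mates_permute_mat_row_sum[OF assms(1,2,4)] by blast

lemma gram_mates_permute_mat_col_less_iff:
  assumes "gram_mates A B" "B = permute_mat \<rho> \<mu> A"
    and "\<rho> permutes {..<dim_row A}" "\<mu> permutes {..<dim_col A}"
    and "col_sum A ` {..<k} \<inter> col_sum A ` {k..<dim_col A} = {}"
  shows "\<forall>j<dim_col A. \<mu> j < k \<longleftrightarrow> j < k"
  using permutes_less_iff_if_disjoint_values[OF assms(4) _ assms(5)]
    gram_mates_permute_mat_col_sum[OF assms(1,2,3)] by blast

section \<open>Permutations of consecutive blocks\<close>

lemma permutes_lessThan_if_inj_on:
  fixes p :: "nat \<Rightarrow> nat"
  assumes "\<forall>i<n. p i < n" "inj_on p {..<n}" "\<forall>i\<ge>n. p i = i"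
  shows "p permutes {..<n}"
proof (rule bij_imp_permutes)
  have "p ` {..<n} = {..<n}"
    using assms(1,2) by (intro endo_inj_surj) auto
  then show "bij_betw p {..<n} {..<n}"
    using assms(2) by (simp add: bij_betw_def)
qed (use assms(3) in auto)

definition perm_sum :: "nat \<Rightarrow> (nat \<Rightarrow> nat) \<Rightarrow> (nat \<Rightarrow> nat) \<Rightarrow> nat \<Rightarrow> nat" where
  "perm_sum a f g i = (if i < a then f i else a + g (i - a))"

lemma perm_sum_less [simp]: "i < a \<Longrightarrow> perm_sum a f g i = f i"
  by (simp add: perm_sum_def)

lemma perm_sum_add [simp]: "perm_sum a f g (a + i) = a + g i"
  by (simp add: perm_sum_def)

lemma perm_sum_permutes:
  assumes f: "f permutes {..<a}" and g: "g permutes {..<b}"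
  shows "perm_sum a f g permutes {..<a + b}"
proof (rule permutes_lessThan_if_inj_on)
  note bounds = permutes_lessThan_less[OF f] permutes_lessThan_less[OF g]
  show "\<forall>i<a + b. perm_sum a f g i < a + b"
  proof (intro allI impI)
    fix i assume "i < a + b"
    then show "perm_sum a f g i < a + b"
      using bounds(1)[of i] bounds(2)[of "i - a"] by (cases "i < a") (simp_all add: perm_sum_def)
  qed
  show "inj_on (perm_sum a f g) {..<a + b}"
  proof (rule inj_onI)
    fix i j assume "i \<in> {..<a + b}" "j \<in> {..<a + b}" "perm_sum a f g i = perm_sum a f g j"
    then show "i = j"
      using bounds(1)[of i] bounds(1)[of j] permutes_inj[OF f] permutes_inj[OF g]
      by (cases "i < a"; cases "j < a") (auto simp: perm_sum_def inj_eq)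
  qed
  show "\<forall>i\<ge>a + b. perm_sum a f g i = i"
    using permutes_not_in[OF g] by (auto simp: perm_sum_def)
qed

lemma perm_sum3_permutes:
  "f permutes {..<a} \<Longrightarrow> g permutes {..<b} \<Longrightarrow> h permutes {..<c} \<Longrightarrow>
    perm_sum a f (perm_sum b g h) permutes {..<a + b + c}"
  using perm_sum_permutes[of f a "perm_sum b g h" "b + c"] perm_sum_permutes[of g b h c]
  by (simp add: add.assoc)

lemma perm_sum_decompose:
  assumes \<sigma>: "\<sigma> permutes {..<a + b}" and split: "\<forall>i<a + b. \<sigma> i < a \<longleftrightarrow> i < a"
  obtains f g where "f permutes {..<a}" "g permutes {..<b}" "\<sigma> = perm_sum a f g"
proof
  define f where "f i = (if i < a then \<sigma> i else i)" for i
  define g where "g i = (if i < b then \<sigma> (a + i) - a else i)" for i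
  note bound = permutes_lessThan_less[OF \<sigma>] and inj = permutes_inj[OF \<sigma>]
  have upper: "a \<le> \<sigma> (a + i)" "\<sigma> (a + i) < a + b" if "i < b" for i
    using split[rule_format, of "a + i"] bound[of "a + i"] that by auto
  show "f permutes {..<a}"
  proof (rule permutes_lessThan_if_inj_on)
    show "\<forall>i<a. f i < a"
      using split by (simp add: f_def)
    show "inj_on f {..<a}"
    proof (rule inj_onI)
      fix i j assume "i \<in> {..<a}" "j \<in> {..<a}" "f i = f j"
      then show "i = j"
        using inj by (simp add: f_def inj_eq)
    qed
  qed (simp add: f_def)
  show "g permutes {..<b}"
  proof (rule permutes_lessThan_if_inj_on)
    show "\<forall>i<b. g i < b"
      using upper by (simp add: g_def less_diff_conv2 add.commute)
    show "inj_on g {..<b}"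
    proof (rule inj_onI)
      fix i j assume "i \<in> {..<b}" "j \<in> {..<b}" "g i = g j"
      then have "\<sigma> (a + i) - a = \<sigma> (a + j) - a" and "a \<le> \<sigma> (a + i)" "a \<le> \<sigma> (a + j)"
        using upper by (simp_all add: g_def)
      then have "\<sigma> (a + i) = \<sigma> (a + j)"
        by linarith
      then show "i = j"
        using inj by (simp add: inj_eq)
    qed
  qed (simp add: g_def)
  show "\<sigma> = perm_sum a f g"
  proof
    fix i
    consider "i < a" | i' where "i = a + i'" "i' < b" | "a + b \<le> i"
      by (metis add_diff_inverse_nat nat_add_left_cancel_less not_less)
    then show "\<sigma> i = perm_sum a f g i"
      by cases (use upper permutes_not_in[OF \<sigma>] in \<open>auto simp: f_def g_def perm_sum_def\<close>)
  qed
qed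

lemma perm_sum3_decompose:
  assumes \<sigma>: "\<sigma> permutes {..<a + b + c}"
    and split: "\<forall>i<a + b + c. \<sigma> i < a \<longleftrightarrow> i < a" "\<forall>i<a + b + c. \<sigma> i < a + b \<longleftrightarrow> i < a + b"
  obtains f g h where "f permutes {..<a}" "g permutes {..<b}" "h permutes {..<c}"
    "\<sigma> = perm_sum a f (perm_sum b g h)"
proof -
  obtain f g' where f: "f permutes {..<a}" and g': "g' permutes {..<b + c}" and \<sigma>_eq: "\<sigma> = perm_sum a f g'"
    using perm_sum_decompose[of \<sigma> a "b + c"] \<sigma> split(1) by (auto simp: add.assoc)
  have "\<forall>i<b + c. g' i < b \<longleftrightarrow> i < b"
  proof (intro allI impI)
    fix i assume "i < b + c"
    then show "g' i < b \<longleftrightarrow> i < b"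
      using split(2)[rule_format, of "a + i"] by (simp add: \<sigma>_eq)
  qed
  then obtain g h where "g permutes {..<b}" "h permutes {..<c}" "g' = perm_sum b g h"
    using perm_sum_decompose[OF g'] by blast
  then show ?thesis
    using that f \<sigma>_eq by blast
qed

definition swap_blocks :: "nat \<Rightarrow> nat \<Rightarrow> nat" where
  "swap_blocks k i = (if i < k then k + i else if i < k + k then i - k else i)"

lemma swap_blocks_less [simp]: "i < k \<Longrightarrow> swap_blocks k i = k + i"
  by (simp add: swap_blocks_def)

lemma swap_blocks_add [simp]: "i < k \<Longrightarrow> swap_blocks k (k + i) = i"
  by (simp add: swap_blocks_def)

lemma swap_blocks_add_add [simp]: "swap_blocks k (k + (k + i)) = k + (k + i)"
  by (simp add: swap_blocks_def)

lemma swap_blocks_swap_blocks [simp]: "swap_blocks k (swap_blocks k i) = i"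
  unfolding swap_blocks_def by (simp split: if_split) linarith

lemma swap_blocks_permutes: "k + k \<le> n \<Longrightarrow> swap_blocks k permutes {..<n}"
  by (rule bij_imp_permutes, rule bij_betwI[where g = "swap_blocks k"])
    (auto simp: swap_blocks_def)

lemma permutes_two_blocks_decompose:
  assumes \<rho>: "\<rho> permutes {..<k + k + m}" and split: "\<forall>i<k + k + m. \<rho> i < k + k \<longleftrightarrow> i < k + k"
    and kept: "\<forall>i<k + k. \<rho> i < k \<longleftrightarrow> i < k"
  obtains \<alpha> \<beta> \<sigma> where "\<alpha> permutes {..<k}" "\<beta> permutes {..<k}" "\<sigma> permutes {..<m}"
    "\<rho> = perm_sum k \<alpha> (perm_sum k \<beta> \<sigma>)"
proof (rule perm_sum3_decompose[OF \<rho> _ split])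
  show "\<forall>i<k + k + m. \<rho> i < k \<longleftrightarrow> i < k"
    using split kept by (metis add_lessD1 not_less trans_less_add1)
qed (use that in blast)

lemma permutes_two_blocks_decompose_swapped:
  assumes \<rho>: "\<rho> permutes {..<k + k + m}" and split: "\<forall>i<k + k + m. \<rho> i < k + k \<longleftrightarrow> i < k + k"
    and swapped: "\<forall>i<k + k. \<rho> i < k \<longleftrightarrow> \<not> i < k"
  obtains \<alpha> \<beta> \<sigma> where "\<alpha> permutes {..<k}" "\<beta> permutes {..<k}" "\<sigma> permutes {..<m}"
    "\<rho> = swap_blocks k \<circ> perm_sum k \<alpha> (perm_sum k \<beta> \<sigma>)"
proof -
  have "swap_blocks k \<circ> \<rho> permutes {..<k + k + m}"
    using \<rho> swap_blocks_permutes[of k "k + k + m"] by (simp add: permutes_compose)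
  moreover have "\<forall>i<k + k + m. (swap_blocks k \<circ> \<rho>) i < k + k \<longleftrightarrow> i < k + k"
  proof (intro allI impI)
    fix i assume "i < k + k + m"
    then show "(swap_blocks k \<circ> \<rho>) i < k + k \<longleftrightarrow> i < k + k"
      using split[rule_format, of i] by (auto simp: swap_blocks_def)
  qed
  moreover have "\<forall>i<k + k. (swap_blocks k \<circ> \<rho>) i < k \<longleftrightarrow> i < k"
  proof (intro allI impI)
    fix i assume "i < k + k"
    then show "(swap_blocks k \<circ> \<rho>) i < k \<longleftrightarrow> i < k"
      using split[rule_format, of i] swapped[rule_format, of i] by (auto simp: swap_blocks_def)
  qed
  ultimately obtain \<alpha> \<beta> \<sigma> where perms: "\<alpha> permutes {..<k}" "\<beta> permutes {..<k}" "\<sigma> permutes {..<m}"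
    and eq: "swap_blocks k \<circ> \<rho> = perm_sum k \<alpha> (perm_sum k \<beta> \<sigma>)"
    by (rule permutes_two_blocks_decompose)
  have "\<rho> = swap_blocks k \<circ> perm_sum k \<alpha> (perm_sum k \<beta> \<sigma>)"
    unfolding eq[symmetric] by (simp add: fun_eq_iff)
  with perms that show ?thesis
    by blast
qed

section \<open>Block matrices with three row and three column blocks\<close>

lemma less_add3_cases:
  fixes i a b c :: nat
  assumes "i < a + b + c"
  obtains "i < a" | i' where "i = a + i'" "i' < b" | i' where "i = a + (b + i')" "i' < c"
proof -
  consider "i < a" | "a \<le> i" "i < a + b" | "a + b \<le> i" by linarith
  then show ?thesis
  proof cases
    case 2
    then show ?thesis using that(2)[of "i - a"] by simp
  next
    case 3
    then show ?thesis using that(3)[of "i - a - b"] assms by simp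
  qed (use that(1) in blast)
qed

lemma dim_block3 [simp]:
  "dim_row (block3 M11 M12 M13 M21 M22 M23 M31 M32 M33) = dim_row M11 + dim_row M21 + dim_row M31"
  "dim_col (block3 M11 M12 M13 M21 M22 M23 M31 M32 M33) = dim_col M11 + dim_col M12 + dim_col M13"
  by (simp_all add: block3_def Let_def)

lemma index_block3:
  assumes "M11 \<in> carrier_mat r1 c1" "M12 \<in> carrier_mat r1 c2" "M13 \<in> carrier_mat r1 c3"
    "M21 \<in> carrier_mat r2 c1" "M31 \<in> carrier_mat r3 c1"
  shows "i < r1 \<Longrightarrow> j < c1 \<Longrightarrow> block3 M11 M12 M13 M21 M22 M23 M31 M32 M33 $$ (i, j) = M11 $$ (i, j)"
    "i < r1 \<Longrightarrow> j < c2 \<Longrightarrow> block3 M11 M12 M13 M21 M22 M23 M31 M32 M33 $$ (i, c1 + j) = M12 $$ (i, j)"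
    "i < r1 \<Longrightarrow> j < c3 \<Longrightarrow> block3 M11 M12 M13 M21 M22 M23 M31 M32 M33 $$ (i, c1 + (c2 + j)) = M13 $$ (i, j)"
    "i < r2 \<Longrightarrow> j < c1 \<Longrightarrow> block3 M11 M12 M13 M21 M22 M23 M31 M32 M33 $$ (r1 + i, j) = M21 $$ (i, j)"
    "i < r2 \<Longrightarrow> j < c2 \<Longrightarrow> block3 M11 M12 M13 M21 M22 M23 M31 M32 M33 $$ (r1 + i, c1 + j) = M22 $$ (i, j)"
    "i < r2 \<Longrightarrow> j < c3 \<Longrightarrow> block3 M11 M12 M13 M21 M22 M23 M31 M32 M33 $$ (r1 + i, c1 + (c2 + j)) = M23 $$ (i, j)"
    "i < r3 \<Longrightarrow> j < c1 \<Longrightarrow> block3 M11 M12 M13 M21 M22 M23 M31 M32 M33 $$ (r1 + (r2 + i), j) = M31 $$ (i, j)"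
    "i < r3 \<Longrightarrow> j < c2 \<Longrightarrow> block3 M11 M12 M13 M21 M22 M23 M31 M32 M33 $$ (r1 + (r2 + i), c1 + j) = M32 $$ (i, j)"
    "i < r3 \<Longrightarrow> j < c3 \<Longrightarrow> block3 M11 M12 M13 M21 M22 M23 M31 M32 M33 $$ (r1 + (r2 + i), c1 + (c2 + j)) = M33 $$ (i, j)"
  using assms by (simp_all add: block3_def Let_def)

lemma permute_block3:
  assumes M: "M11 \<in> carrier_mat r1 c1" "M12 \<in> carrier_mat r1 c2" "M13 \<in> carrier_mat r1 c3"
    "M21 \<in> carrier_mat r2 c1" "M22 \<in> carrier_mat r2 c2" "M23 \<in> carrier_mat r2 c3"
    "M31 \<in> carrier_mat r3 c1" "M32 \<in> carrier_mat r3 c2" "M33 \<in> carrier_mat r3 c3"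
    and \<sigma>: "\<sigma>1 permutes {..<r1}" "\<sigma>2 permutes {..<r2}" "\<sigma>3 permutes {..<r3}"
    and \<tau>: "\<tau>1 permutes {..<c1}" "\<tau>2 permutes {..<c2}" "\<tau>3 permutes {..<c3}"
  shows "permute_mat (perm_sum r1 \<sigma>1 (perm_sum r2 \<sigma>2 \<sigma>3)) (perm_sum c1 \<tau>1 (perm_sum c2 \<tau>2 \<tau>3))
      (block3 M11 M12 M13 M21 M22 M23 M31 M32 M33) =
    block3 (permute_mat \<sigma>1 \<tau>1 M11) (permute_mat \<sigma>1 \<tau>2 M12) (permute_mat \<sigma>1 \<tau>3 M13)
      (permute_mat \<sigma>2 \<tau>1 M21) (permute_mat \<sigma>2 \<tau>2 M22) (permute_mat \<sigma>2 \<tau>3 M23)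
      (permute_mat \<sigma>3 \<tau>1 M31) (permute_mat \<sigma>3 \<tau>2 M32) (permute_mat \<sigma>3 \<tau>3 M33)"
    (is "?lhs = ?rhs")
proof (rule eq_matI)
  have M': "permute_mat \<sigma>1 \<tau>1 M11 \<in> carrier_mat r1 c1" "permute_mat \<sigma>1 \<tau>2 M12 \<in> carrier_mat r1 c2"
    "permute_mat \<sigma>1 \<tau>3 M13 \<in> carrier_mat r1 c3" "permute_mat \<sigma>2 \<tau>1 M21 \<in> carrier_mat r2 c1"
    "permute_mat \<sigma>3 \<tau>1 M31 \<in> carrier_mat r3 c1"
    using M by auto
  note bounds = permutes_lessThan_less[OF \<sigma>(1)] permutes_lessThan_less[OF \<sigma>(2)]
    permutes_lessThan_less[OF \<sigma>(3)] permutes_lessThan_less[OF \<tau>(1)]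
    permutes_lessThan_less[OF \<tau>(2)] permutes_lessThan_less[OF \<tau>(3)]
  fix i j assume "i < dim_row ?rhs" "j < dim_col ?rhs"
  then have i: "i < r1 + r2 + r3" and j: "j < c1 + c2 + c3"
    using M by auto
  show "?lhs $$ (i, j) = ?rhs $$ (i, j)"
    using i j M by (cases rule: less_add3_cases[OF i]; cases rule: less_add3_cases[OF j])
      (simp_all add: index_block3[OF M(1-4,7)] index_block3[OF M'] bounds)
qed (use M in auto)

lemma permute_block3_swap_rows:
  assumes M: "M11 \<in> carrier_mat r c1" "M12 \<in> carrier_mat r c2" "M13 \<in> carrier_mat r c3"
    "M21 \<in> carrier_mat r c1" "M22 \<in> carrier_mat r c2" "M23 \<in> carrier_mat r c3"
    "M31 \<in> carrier_mat r3 c1" "M32 \<in> carrier_mat r3 c2" "M33 \<in> carrier_mat r3 c3"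
  shows "permute_mat (swap_blocks r) id (block3 M11 M12 M13 M21 M22 M23 M31 M32 M33) =
    block3 M21 M22 M23 M11 M12 M13 M31 M32 M33" (is "?lhs = ?rhs")
proof (rule eq_matI)
  fix i j assume "i < dim_row ?rhs" "j < dim_col ?rhs"
  then have i: "i < r + r + r3" and j: "j < c1 + c2 + c3"
    using M by auto
  show "?lhs $$ (i, j) = ?rhs $$ (i, j)"
    using i j M by (cases rule: less_add3_cases[OF i]; cases rule: less_add3_cases[OF j])
      (simp_all add: index_block3[OF M(1-4,7)] index_block3[OF M(4-6,1,7)])
qed (use M in auto)

lemma permute_block3_swap_cols:
  assumes M: "M11 \<in> carrier_mat r1 c" "M12 \<in> carrier_mat r1 c" "M13 \<in> carrier_mat r1 c3"
    "M21 \<in> carrier_mat r2 c" "M22 \<in> carrier_mat r2 c" "M23 \<in> carrier_mat r2 c3"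
    "M31 \<in> carrier_mat r3 c" "M32 \<in> carrier_mat r3 c" "M33 \<in> carrier_mat r3 c3"
  shows "permute_mat id (swap_blocks c) (block3 M11 M12 M13 M21 M22 M23 M31 M32 M33) =
    block3 M12 M11 M13 M22 M21 M23 M32 M31 M33" (is "?lhs = ?rhs")
proof (rule eq_matI)
  fix i j assume "i < dim_row ?rhs" "j < dim_col ?rhs"
  then have i: "i < r1 + r2 + r3" and j: "j < c + c + c3"
    using M by auto
  show "?lhs $$ (i, j) = ?rhs $$ (i, j)"
    using i j M by (cases rule: less_add3_cases[OF i]; cases rule: less_add3_cases[OF j])
      (simp_all add: index_block3[OF M(1-4,7)] index_block3[OF M(2,1,3,5,8)])
qed (use M in auto)

lemma block3_eq_iff:
  assumes M: "M11 \<in> carrier_mat r1 c1" "M12 \<in> carrier_mat r1 c2" "M13 \<in> carrier_mat r1 c3"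
    "M21 \<in> carrier_mat r2 c1" "M22 \<in> carrier_mat r2 c2" "M23 \<in> carrier_mat r2 c3"
    "M31 \<in> carrier_mat r3 c1" "M32 \<in> carrier_mat r3 c2" "M33 \<in> carrier_mat r3 c3"
    and N: "N11 \<in> carrier_mat r1 c1" "N12 \<in> carrier_mat r1 c2" "N13 \<in> carrier_mat r1 c3"
    "N21 \<in> carrier_mat r2 c1" "N22 \<in> carrier_mat r2 c2" "N23 \<in> carrier_mat r2 c3"
    "N31 \<in> carrier_mat r3 c1" "N32 \<in> carrier_mat r3 c2" "N33 \<in> carrier_mat r3 c3"
  shows "block3 M11 M12 M13 M21 M22 M23 M31 M32 M33 = block3 N11 N12 N13 N21 N22 N23 N31 N32 N33 \<longleftrightarrow>
    M11 = N11 \<and> M12 = N12 \<and> M13 = N13 \<and> M21 = N21 \<and> M22 = N22 \<and> M23 = N23 \<and>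
    M31 = N31 \<and> M32 = N32 \<and> M33 = N33"
proof
  assume eq: "block3 M11 M12 M13 M21 M22 M23 M31 M32 M33 = block3 N11 N12 N13 N21 N22 N23 N31 N32 N33"
  note index = index_block3[OF M(1-4,7)] index_block3[OF N(1-4,7)]
  have entry: "block3 M11 M12 M13 M21 M22 M23 M31 M32 M33 $$ (i, j) =
      block3 N11 N12 N13 N21 N22 N23 N31 N32 N33 $$ (i, j)" for i j
    by (simp add: eq)
  have "M11 $$ (i, j) = N11 $$ (i, j)" if "i < r1" "j < c1" for i j
    using entry[of i j] that by (simp add: index)
  moreover have "M12 $$ (i, j) = N12 $$ (i, j)" if "i < r1" "j < c2" for i j
    using entry[of i "c1 + j"] that by (simp add: index)
  moreover have "M13 $$ (i, j) = N13 $$ (i, j)" if "i < r1" "j < c3" for i j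
    using entry[of i "c1 + (c2 + j)"] that by (simp add: index)
  moreover have "M21 $$ (i, j) = N21 $$ (i, j)" if "i < r2" "j < c1" for i j
    using entry[of "r1 + i" j] that by (simp add: index)
  moreover have "M22 $$ (i, j) = N22 $$ (i, j)" if "i < r2" "j < c2" for i j
    using entry[of "r1 + i" "c1 + j"] that by (simp add: index)
  moreover have "M23 $$ (i, j) = N23 $$ (i, j)" if "i < r2" "j < c3" for i j
    using entry[of "r1 + i" "c1 + (c2 + j)"] that by (simp add: index)
  moreover have "M31 $$ (i, j) = N31 $$ (i, j)" if "i < r3" "j < c1" for i j
    using entry[of "r1 + (r2 + i)" j] that by (simp add: index)
  moreover have "M32 $$ (i, j) = N32 $$ (i, j)" if "i < r3" "j < c2" for i j
    using entry[of "r1 + (r2 + i)" "c1 + j"] that by (simp add: index)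
  moreover have "M33 $$ (i, j) = N33 $$ (i, j)" if "i < r3" "j < c3" for i j
    using entry[of "r1 + (r2 + i)" "c1 + (c2 + j)"] that by (simp add: index)
  ultimately show "M11 = N11 \<and> M12 = N12 \<and> M13 = N13 \<and> M21 = N21 \<and> M22 = N22 \<and> M23 = N23 \<and>
    M31 = N31 \<and> M32 = N32 \<and> M33 = N33"
    using M N by (intro conjI eq_matI) auto
qed simp

definition antidiag_ones_block3 ::
    "nat \<Rightarrow> nat \<Rightarrow> int mat \<Rightarrow> int mat \<Rightarrow> int mat \<Rightarrow> int mat \<Rightarrow> int mat \<Rightarrow> int mat" where
  "antidiag_ones_block3 k1 k2 X1 X2 X3 X4 Y =
    block3 (0\<^sub>m k1 k2) (all_ones_mat k1 k2) X1 (all_ones_mat k1 k2) (0\<^sub>m k1 k2) X2 X3 X4 Y"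

definition diag_ones_block3 ::
    "nat \<Rightarrow> nat \<Rightarrow> int mat \<Rightarrow> int mat \<Rightarrow> int mat \<Rightarrow> int mat \<Rightarrow> int mat \<Rightarrow> int mat" where
  "diag_ones_block3 k1 k2 X1 X2 X3 X4 Y =
    block3 (all_ones_mat k1 k2) (0\<^sub>m k1 k2) X1 (0\<^sub>m k1 k2) (all_ones_mat k1 k2) X2 X3 X4 Y"

lemma antidiag_ones_block3_carrier:
  "X1 \<in> carrier_mat k1 n \<Longrightarrow> X3 \<in> carrier_mat m k2 \<Longrightarrow>
    antidiag_ones_block3 k1 k2 X1 X2 X3 X4 Y \<in> carrier_mat (k1 + k1 + m) (k2 + k2 + n)"
  by (intro carrier_matI) (simp_all add: antidiag_ones_block3_def)

lemma index_corner_ones_block3: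
  assumes "X1 \<in> carrier_mat k1 n" "X2 \<in> carrier_mat k1 n" "X3 \<in> carrier_mat m k2"
    and "i < k1 + k1" "j < k2 + k2"
  shows "antidiag_ones_block3 k1 k2 X1 X2 X3 X4 Y $$ (i, j) = (if (i < k1) = (j < k2) then 0 else 1)"
    "diag_ones_block3 k1 k2 X1 X2 X3 X4 Y $$ (i, j) = (if (i < k1) = (j < k2) then 1 else 0)"
  using assms by (simp_all add: antidiag_ones_block3_def diag_ones_block3_def block3_def Let_def
      all_ones_mat_def)

lemma diag_ones_eq_permute_swap_rows_iff:
  assumes X: "X1 \<in> carrier_mat k1 n" "X2 \<in> carrier_mat k1 n" "X3 \<in> carrier_mat m k2"
      "X4 \<in> carrier_mat m k2" "Y \<in> carrier_mat m n"
    and perms: "\<alpha> permutes {..<k1}" "\<beta> permutes {..<k1}" "\<gamma> permutes {..<k2}" "\<delta> permutes {..<k2}"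
      "\<sigma> permutes {..<m}" "\<tau> permutes {..<n}"
  shows "diag_ones_block3 k1 k2 X1 X2 X3 X4 Y =
      permute_mat (swap_blocks k1 \<circ> perm_sum k1 \<alpha> (perm_sum k1 \<beta> \<sigma>)) (perm_sum k2 \<gamma> (perm_sum k2 \<delta> \<tau>))
        (antidiag_ones_block3 k1 k2 X1 X2 X3 X4 Y) \<longleftrightarrow>
    X1 = permute_mat \<alpha> \<tau> X2 \<and> X2 = permute_mat \<beta> \<tau> X1 \<and>
    X3 = permute_mat \<sigma> \<gamma> X3 \<and> X4 = permute_mat \<sigma> \<delta> X4 \<and> Y = permute_mat \<sigma> \<tau> Y"
proof -
  let ?A = "antidiag_ones_block3 k1 k2 X1 X2 X3 X4 Y" and ?J = "all_ones_mat k1 k2" and ?O = "0\<^sub>m k1 k2"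
  let ?rows = "perm_sum k1 \<alpha> (perm_sum k1 \<beta> \<sigma>)" and ?cols = "perm_sum k2 \<gamma> (perm_sum k2 \<delta> \<tau>)"
  have O: "?O \<in> carrier_mat k1 k2"
    by simp
  have "?rows permutes {..<k1 + k1 + m}" "?cols permutes {..<k2 + k2 + n}"
    using perms by (simp_all add: perm_sum3_permutes)
  then have "\<forall>i<dim_row ?A. ?rows i < dim_row ?A" "\<forall>j<dim_col ?A. ?cols j < dim_col ?A"
    using X by (auto simp: antidiag_ones_block3_def permutes_lessThan_less)
  from permute_mat_comp[OF this, of "swap_blocks k1" id]
  have "permute_mat (swap_blocks k1 \<circ> ?rows) ?cols ?A =
      permute_mat ?rows ?cols (permute_mat (swap_blocks k1) id ?A)"
    by (simp only: id_comp)
  also have "permute_mat (swap_blocks k1) id ?A = block3 ?J ?O X2 ?O ?J X1 X3 X4 Y"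
    unfolding antidiag_ones_block3_def using X by (intro permute_block3_swap_rows) auto
  also have "permute_mat ?rows ?cols (block3 ?J ?O X2 ?O ?J X1 X3 X4 Y) =
      block3 ?J ?O (permute_mat \<alpha> \<tau> X2) ?O ?J (permute_mat \<beta> \<tau> X1)
        (permute_mat \<sigma> \<gamma> X3) (permute_mat \<sigma> \<delta> X4) (permute_mat \<sigma> \<tau> Y)"
    using permute_block3[OF all_ones_mat_carrier O X(2) O all_ones_mat_carrier X(1) X(3-5) perms(1,2,5,3,4,6)]
      perms by (simp add: permute_mat_all_ones permute_mat_zero)
  finally have permuted: "permute_mat (swap_blocks k1 \<circ> ?rows) ?cols ?A =
      block3 ?J ?O (permute_mat \<alpha> \<tau> X2) ?O ?J (permute_mat \<beta> \<tau> X1)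
        (permute_mat \<sigma> \<gamma> X3) (permute_mat \<sigma> \<delta> X4) (permute_mat \<sigma> \<tau> Y)" .
  show ?thesis
    unfolding diag_ones_block3_def permuted using X
    by (simp add: block3_eq_iff[OF all_ones_mat_carrier O X(1) O all_ones_mat_carrier X(2) X(3-5)
          all_ones_mat_carrier O _ O all_ones_mat_carrier])
qed

lemma diag_ones_eq_permute_swap_cols_iff:
  assumes X: "X1 \<in> carrier_mat k1 n" "X2 \<in> carrier_mat k1 n" "X3 \<in> carrier_mat m k2"
      "X4 \<in> carrier_mat m k2" "Y \<in> carrier_mat m n"
    and perms: "\<alpha> permutes {..<k1}" "\<beta> permutes {..<k1}" "\<gamma> permutes {..<k2}" "\<delta> permutes {..<k2}"
      "\<sigma> permutes {..<m}" "\<tau> permutes {..<n}"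
  shows "diag_ones_block3 k1 k2 X1 X2 X3 X4 Y =
      permute_mat (perm_sum k1 \<alpha> (perm_sum k1 \<beta> \<sigma>)) (swap_blocks k2 \<circ> perm_sum k2 \<gamma> (perm_sum k2 \<delta> \<tau>))
        (antidiag_ones_block3 k1 k2 X1 X2 X3 X4 Y) \<longleftrightarrow>
    X1 = permute_mat \<alpha> \<tau> X1 \<and> X2 = permute_mat \<beta> \<tau> X2 \<and>
    X3 = permute_mat \<sigma> \<gamma> X4 \<and> X4 = permute_mat \<sigma> \<delta> X3 \<and> Y = permute_mat \<sigma> \<tau> Y"
proof -
  let ?A = "antidiag_ones_block3 k1 k2 X1 X2 X3 X4 Y" and ?J = "all_ones_mat k1 k2" and ?O = "0\<^sub>m k1 k2"
  let ?rows = "perm_sum k1 \<alpha> (perm_sum k1 \<beta> \<sigma>)" and ?cols = "perm_sum k2 \<gamma> (perm_sum k2 \<delta> \<tau>)"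
  have O: "?O \<in> carrier_mat k1 k2"
    by simp
  have "?rows permutes {..<k1 + k1 + m}" "?cols permutes {..<k2 + k2 + n}"
    using perms by (simp_all add: perm_sum3_permutes)
  then have "\<forall>i<dim_row ?A. ?rows i < dim_row ?A" "\<forall>j<dim_col ?A. ?cols j < dim_col ?A"
    using X by (auto simp: antidiag_ones_block3_def permutes_lessThan_less)
  from permute_mat_comp[OF this, of id "swap_blocks k2"]
  have "permute_mat ?rows (swap_blocks k2 \<circ> ?cols) ?A =
      permute_mat ?rows ?cols (permute_mat id (swap_blocks k2) ?A)"
    by (simp only: id_comp)
  also have "permute_mat id (swap_blocks k2) ?A = block3 ?J ?O X1 ?O ?J X2 X4 X3 Y"
    unfolding antidiag_ones_block3_def using X by (intro permute_block3_swap_cols) auto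
  also have "permute_mat ?rows ?cols (block3 ?J ?O X1 ?O ?J X2 X4 X3 Y) =
      block3 ?J ?O (permute_mat \<alpha> \<tau> X1) ?O ?J (permute_mat \<beta> \<tau> X2)
        (permute_mat \<sigma> \<gamma> X4) (permute_mat \<sigma> \<delta> X3) (permute_mat \<sigma> \<tau> Y)"
    using permute_block3[OF all_ones_mat_carrier O X(1) O all_ones_mat_carrier X(2) X(4,3,5) perms(1,2,5,3,4,6)]
      perms by (simp add: permute_mat_all_ones permute_mat_zero)
  finally have permuted: "permute_mat ?rows (swap_blocks k2 \<circ> ?cols) ?A =
      block3 ?J ?O (permute_mat \<alpha> \<tau> X1) ?O ?J (permute_mat \<beta> \<tau> X2)
        (permute_mat \<sigma> \<gamma> X4) (permute_mat \<sigma> \<delta> X3) (permute_mat \<sigma> \<tau> Y)" .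
  show ?thesis
    unfolding diag_ones_block3_def permuted using X
    by (simp add: block3_eq_iff[OF all_ones_mat_carrier O X(1) O all_ones_mat_carrier X(2) X(3-5)
          all_ones_mat_carrier O _ O all_ones_mat_carrier])
qed

lemma corner_of_diag_ones_eq_permute:
  assumes X: "X1 \<in> carrier_mat k1 n" "X2 \<in> carrier_mat k1 n" "X3 \<in> carrier_mat m k2"
    and \<rho>: "\<forall>i<k1 + k1. \<rho> i < k1 + k1" and \<mu>: "\<forall>j<k2 + k2. \<mu> j < k2 + k2"
    and eq: "diag_ones_block3 k1 k2 X1 X2 X3 X4 Y =
      permute_mat \<rho> \<mu> (antidiag_ones_block3 k1 k2 X1 X2 X3 X4 Y)"
    and "i < k1 + k1" "j < k2 + k2"
  shows "(i < k1 \<longleftrightarrow> j < k2) \<longleftrightarrow> (\<rho> i < k1 \<longleftrightarrow> \<not> \<mu> j < k2)"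
proof -
  have "diag_ones_block3 k1 k2 X1 X2 X3 X4 Y $$ (i, j) =
      antidiag_ones_block3 k1 k2 X1 X2 X3 X4 Y $$ (\<rho> i, \<mu> j)"
    using eq assms(7,8) X by (simp add: antidiag_ones_block3_def)
  then show ?thesis
    using assms(7,8) \<rho> \<mu> by (simp add: index_corner_ones_block3[OF X] split: if_splits)
qed

lemma diag_ones_eq_permute_swaps_one_pair_of_blocks:
  assumes k: "0 < k1" "0 < k2"
    and X: "X1 \<in> carrier_mat k1 n" "X2 \<in> carrier_mat k1 n" "X3 \<in> carrier_mat m k2"
    and \<rho>: "\<forall>i<k1 + k1. \<rho> i < k1 + k1" and \<mu>: "\<forall>j<k2 + k2. \<mu> j < k2 + k2"
    and eq: "diag_ones_block3 k1 k2 X1 X2 X3 X4 Y =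
      permute_mat \<rho> \<mu> (antidiag_ones_block3 k1 k2 X1 X2 X3 X4 Y)"
  obtains (cols_swapped) "\<forall>i<k1 + k1. \<rho> i < k1 \<longleftrightarrow> i < k1" "\<forall>j<k2 + k2. \<mu> j < k2 \<longleftrightarrow> \<not> j < k2"
    | (rows_swapped) "\<forall>i<k1 + k1. \<rho> i < k1 \<longleftrightarrow> \<not> i < k1" "\<forall>j<k2 + k2. \<mu> j < k2 \<longleftrightarrow> j < k2"
proof -
  note corner = corner_of_diag_ones_eq_permute[OF X \<rho> \<mu> eq]
  have rows: "\<rho> i < k1 \<longleftrightarrow> (i < k1 \<longleftrightarrow> \<not> \<mu> 0 < k2)" if "i < k1 + k1" for i
    using corner[OF that, of 0] k by auto
  have cols: "\<mu> j < k2 \<longleftrightarrow> (j < k2 \<longleftrightarrow> \<not> \<rho> 0 < k1)" if "j < k2 + k2" for j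
    using corner[OF _ that, of 0] k by auto
  consider "\<rho> 0 < k1" "\<not> \<mu> 0 < k2" | "\<not> \<rho> 0 < k1" "\<mu> 0 < k2"
    using corner[of 0 0] k by auto
  then show ?thesis
  proof cases
    case 1
    then have "\<forall>i<k1 + k1. \<rho> i < k1 \<longleftrightarrow> i < k1" "\<forall>j<k2 + k2. \<mu> j < k2 \<longleftrightarrow> \<not> j < k2"
      using rows cols by simp_all
    then show ?thesis
      by (rule that(1))
  next
    case 2
    then have "\<forall>i<k1 + k1. \<rho> i < k1 \<longleftrightarrow> \<not> i < k1" "\<forall>j<k2 + k2. \<mu> j < k2 \<longleftrightarrow> j < k2"
      using rows cols by simp_all
    then show ?thesis
      by (rule that(2))
  qed
qed

lemma diag_ones_eq_permute_decompose:
  assumes k: "0 < k1" "0 < k2"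
    and X: "X1 \<in> carrier_mat k1 n" "X2 \<in> carrier_mat k1 n" "X3 \<in> carrier_mat m k2"
    and \<rho>: "\<rho> permutes {..<k1 + k1 + m}" and \<mu>: "\<mu> permutes {..<k2 + k2 + n}"
    and \<rho>_split: "\<forall>i<k1 + k1 + m. \<rho> i < k1 + k1 \<longleftrightarrow> i < k1 + k1"
    and \<mu>_split: "\<forall>j<k2 + k2 + n. \<mu> j < k2 + k2 \<longleftrightarrow> j < k2 + k2"
    and eq: "diag_ones_block3 k1 k2 X1 X2 X3 X4 Y =
      permute_mat \<rho> \<mu> (antidiag_ones_block3 k1 k2 X1 X2 X3 X4 Y)"
  obtains \<alpha> \<beta> \<gamma> \<delta> \<sigma> \<tau> where "\<alpha> permutes {..<k1}" "\<beta> permutes {..<k1}" "\<gamma> permutes {..<k2}"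
      "\<delta> permutes {..<k2}" "\<sigma> permutes {..<m}" "\<tau> permutes {..<n}"
    and "\<rho> = swap_blocks k1 \<circ> perm_sum k1 \<alpha> (perm_sum k1 \<beta> \<sigma>) \<and> \<mu> = perm_sum k2 \<gamma> (perm_sum k2 \<delta> \<tau>) \<or>
      \<rho> = perm_sum k1 \<alpha> (perm_sum k1 \<beta> \<sigma>) \<and> \<mu> = swap_blocks k2 \<circ> perm_sum k2 \<gamma> (perm_sum k2 \<delta> \<tau>)"
proof -
  have "\<forall>i<k1 + k1. \<rho> i < k1 + k1" "\<forall>j<k2 + k2. \<mu> j < k2 + k2"
    using \<rho>_split \<mu>_split by auto
  then show ?thesis
  proof (rule diag_ones_eq_permute_swaps_one_pair_of_blocks[OF k X _ _ eq])
    assume "\<forall>i<k1 + k1. \<rho> i < k1 \<longleftrightarrow> i < k1" "\<forall>j<k2 + k2. \<mu> j < k2 \<longleftrightarrow> \<not> j < k2"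
    obtain \<alpha> \<beta> \<sigma> where "\<alpha> permutes {..<k1}" "\<beta> permutes {..<k1}" "\<sigma> permutes {..<m}"
      "\<rho> = perm_sum k1 \<alpha> (perm_sum k1 \<beta> \<sigma>)"
      using permutes_two_blocks_decompose[OF \<rho> \<rho>_split \<open>\<forall>i<k1 + k1. \<rho> i < k1 \<longleftrightarrow> i < k1\<close>] by blast
    moreover obtain \<gamma> \<delta> \<tau> where "\<gamma> permutes {..<k2}" "\<delta> permutes {..<k2}" "\<tau> permutes {..<n}"
      "\<mu> = swap_blocks k2 \<circ> perm_sum k2 \<gamma> (perm_sum k2 \<delta> \<tau>)"
      using permutes_two_blocks_decompose_swapped[OF \<mu> \<mu>_split \<open>\<forall>j<k2 + k2. \<mu> j < k2 \<longleftrightarrow> \<not> j < k2\<close>]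
      by blast
    ultimately show ?thesis
      using that by blast
  next
    assume "\<forall>i<k1 + k1. \<rho> i < k1 \<longleftrightarrow> \<not> i < k1" "\<forall>j<k2 + k2. \<mu> j < k2 \<longleftrightarrow> j < k2"
    obtain \<alpha> \<beta> \<sigma> where "\<alpha> permutes {..<k1}" "\<beta> permutes {..<k1}" "\<sigma> permutes {..<m}"
      "\<rho> = swap_blocks k1 \<circ> perm_sum k1 \<alpha> (perm_sum k1 \<beta> \<sigma>)"
      using permutes_two_blocks_decompose_swapped[OF \<rho> \<rho>_split \<open>\<forall>i<k1 + k1. \<rho> i < k1 \<longleftrightarrow> \<not> i < k1\<close>]
      by blast
    moreover obtain \<gamma> \<delta> \<tau> where "\<gamma> permutes {..<k2}" "\<delta> permutes {..<k2}" "\<tau> permutes {..<n}"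
      "\<mu> = perm_sum k2 \<gamma> (perm_sum k2 \<delta> \<tau>)"
      using permutes_two_blocks_decompose[OF \<mu> \<mu>_split \<open>\<forall>j<k2 + k2. \<mu> j < k2 \<longleftrightarrow> j < k2\<close>] by blast
    ultimately show ?thesis
      using that by blast
  qed
qed

lemma fixable_perm_if_diag_ones_eq_permute:
  assumes k: "0 < k1" "0 < k2"
    and X: "X1 \<in> carrier_mat k1 n" "X2 \<in> carrier_mat k1 n" "X3 \<in> carrier_mat m k2"
      "X4 \<in> carrier_mat m k2" "Y \<in> carrier_mat m n"
    and \<rho>: "\<rho> permutes {..<k1 + k1 + m}" and \<mu>: "\<mu> permutes {..<k2 + k2 + n}"
    and \<rho>_split: "\<forall>i<k1 + k1 + m. \<rho> i < k1 + k1 \<longleftrightarrow> i < k1 + k1"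
    and \<mu>_split: "\<forall>j<k2 + k2 + n. \<mu> j < k2 + k2 \<longleftrightarrow> j < k2 + k2"
    and eq: "diag_ones_block3 k1 k2 X1 X2 X3 X4 Y =
      permute_mat \<rho> \<mu> (antidiag_ones_block3 k1 k2 X1 X2 X3 X4 Y)"
  shows "fixable_perm X1 X2 X3 X4 Y"
proof -
  obtain \<alpha> \<beta> \<gamma> \<delta> \<sigma> \<tau> where perms: "\<alpha> permutes {..<k1}" "\<beta> permutes {..<k1}" "\<gamma> permutes {..<k2}"
      "\<delta> permutes {..<k2}" "\<sigma> permutes {..<m}" "\<tau> permutes {..<n}"
    and alt: "\<rho> = swap_blocks k1 \<circ> perm_sum k1 \<alpha> (perm_sum k1 \<beta> \<sigma>) \<and> \<mu> = perm_sum k2 \<gamma> (perm_sum k2 \<delta> \<tau>) \<or>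
      \<rho> = perm_sum k1 \<alpha> (perm_sum k1 \<beta> \<sigma>) \<and> \<mu> = swap_blocks k2 \<circ> perm_sum k2 \<gamma> (perm_sum k2 \<delta> \<tau>)"
    by (rule diag_ones_eq_permute_decompose[OF k X(1-3) \<rho> \<mu> \<rho>_split \<mu>_split eq])
  have "Y = permute_mat \<sigma> \<tau> Y \<and>
    (X1 = permute_mat \<alpha> \<tau> X2 \<and> X2 = permute_mat \<beta> \<tau> X1 \<and>
      X3 = permute_mat \<sigma> \<gamma> X3 \<and> X4 = permute_mat \<sigma> \<delta> X4 \<or>
    X1 = permute_mat \<alpha> \<tau> X1 \<and> X2 = permute_mat \<beta> \<tau> X2 \<and>
      X3 = permute_mat \<sigma> \<gamma> X4 \<and> X4 = permute_mat \<sigma> \<delta> X3)"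
    using alt
  proof (elim disjE conjE)
    assume "\<rho> = swap_blocks k1 \<circ> perm_sum k1 \<alpha> (perm_sum k1 \<beta> \<sigma>)" "\<mu> = perm_sum k2 \<gamma> (perm_sum k2 \<delta> \<tau>)"
    with eq have "diag_ones_block3 k1 k2 X1 X2 X3 X4 Y =
      permute_mat (swap_blocks k1 \<circ> perm_sum k1 \<alpha> (perm_sum k1 \<beta> \<sigma>)) (perm_sum k2 \<gamma> (perm_sum k2 \<delta> \<tau>))
        (antidiag_ones_block3 k1 k2 X1 X2 X3 X4 Y)"
      by simp
    from iffD1[OF diag_ones_eq_permute_swap_rows_iff[OF X perms] this] show ?thesis
      by blast
  next
    assume "\<rho> = perm_sum k1 \<alpha> (perm_sum k1 \<beta> \<sigma>)" "\<mu> = swap_blocks k2 \<circ> perm_sum k2 \<gamma> (perm_sum k2 \<delta> \<tau>)"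
    with eq have "diag_ones_block3 k1 k2 X1 X2 X3 X4 Y =
      permute_mat (perm_sum k1 \<alpha> (perm_sum k1 \<beta> \<sigma>)) (swap_blocks k2 \<circ> perm_sum k2 \<gamma> (perm_sum k2 \<delta> \<tau>))
        (antidiag_ones_block3 k1 k2 X1 X2 X3 X4 Y)"
      by simp
    from iffD1[OF diag_ones_eq_permute_swap_cols_iff[OF X perms] this] show ?thesis
      by blast
  qed
  then show ?thesis
    unfolding fixable_perm_def carrier_matD[OF X(1)] carrier_matD[OF X(3)] carrier_matD[OF X(5)]
    using perms by blast
qed

lemma diag_ones_eq_permute_if_fixable_perm:
  assumes X: "X1 \<in> carrier_mat k1 n" "X2 \<in> carrier_mat k1 n" "X3 \<in> carrier_mat m k2"
      "X4 \<in> carrier_mat m k2" "Y \<in> carrier_mat m n"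
    and fixable: "fixable_perm X1 X2 X3 X4 Y"
  shows "\<exists>\<rho> \<mu>. \<rho> permutes {..<k1 + k1 + m} \<and> \<mu> permutes {..<k2 + k2 + n} \<and>
    diag_ones_block3 k1 k2 X1 X2 X3 X4 Y = permute_mat \<rho> \<mu> (antidiag_ones_block3 k1 k2 X1 X2 X3 X4 Y)"
proof -
  obtain \<sigma> \<tau> \<alpha> \<beta> \<gamma> \<delta> where perms: "\<alpha> permutes {..<k1}" "\<beta> permutes {..<k1}"
      "\<gamma> permutes {..<k2}" "\<delta> permutes {..<k2}" "\<sigma> permutes {..<m}" "\<tau> permutes {..<n}"
    and "Y = permute_mat \<sigma> \<tau> Y"
    and alt: "X1 = permute_mat \<alpha> \<tau> X2 \<and> X2 = permute_mat \<beta> \<tau> X1 \<and>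
       X3 = permute_mat \<sigma> \<gamma> X3 \<and> X4 = permute_mat \<sigma> \<delta> X4 \<or>
       X1 = permute_mat \<alpha> \<tau> X1 \<and> X2 = permute_mat \<beta> \<tau> X2 \<and>
       X3 = permute_mat \<sigma> \<gamma> X4 \<and> X4 = permute_mat \<sigma> \<delta> X3"
    using fixable unfolding fixable_perm_def carrier_matD[OF X(1)] carrier_matD[OF X(3)] carrier_matD[OF X(5)]
    by blast
  let ?rows = "perm_sum k1 \<alpha> (perm_sum k1 \<beta> \<sigma>)" and ?cols = "perm_sum k2 \<gamma> (perm_sum k2 \<delta> \<tau>)"
  have rows: "?rows permutes {..<k1 + k1 + m}" "swap_blocks k1 \<circ> ?rows permutes {..<k1 + k1 + m}"
    and cols: "?cols permutes {..<k2 + k2 + n}" "swap_blocks k2 \<circ> ?cols permutes {..<k2 + k2 + n}"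
    using perms by (simp_all add: perm_sum3_permutes permutes_compose swap_blocks_permutes)
  from alt show ?thesis
  proof
    assume "X1 = permute_mat \<alpha> \<tau> X2 \<and> X2 = permute_mat \<beta> \<tau> X1 \<and>
      X3 = permute_mat \<sigma> \<gamma> X3 \<and> X4 = permute_mat \<sigma> \<delta> X4"
    then have "diag_ones_block3 k1 k2 X1 X2 X3 X4 Y =
        permute_mat (swap_blocks k1 \<circ> ?rows) ?cols (antidiag_ones_block3 k1 k2 X1 X2 X3 X4 Y)"
      using \<open>Y = permute_mat \<sigma> \<tau> Y\<close> by (intro iffD2[OF diag_ones_eq_permute_swap_rows_iff[OF X perms]]) blast
    then show ?thesis
      using rows(2) cols(1) by blast
  next
    assume "X1 = permute_mat \<alpha> \<tau> X1 \<and> X2 = permute_mat \<beta> \<tau> X2 \<and>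
      X3 = permute_mat \<sigma> \<gamma> X4 \<and> X4 = permute_mat \<sigma> \<delta> X3"
    then have "diag_ones_block3 k1 k2 X1 X2 X3 X4 Y =
        permute_mat ?rows (swap_blocks k2 \<circ> ?cols) (antidiag_ones_block3 k1 k2 X1 X2 X3 X4 Y)"
      using \<open>Y = permute_mat \<sigma> \<tau> Y\<close> by (intro iffD2[OF diag_ones_eq_permute_swap_cols_iff[OF X perms]]) blast
    then show ?thesis
      using rows(1) cols(2) by blast
  qed
qed

lemma isomorphic_antidiag_diag_ones_iff_fixable_perm:
  fixes k1 k2 m n :: nat and X1 X2 X3 X4 Y A B :: "int mat"
  defines "A \<equiv> antidiag_ones_block3 k1 k2 X1 X2 X3 X4 Y" and "B \<equiv> diag_ones_block3 k1 k2 X1 X2 X3 X4 Y"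
  assumes k: "0 < k1" "0 < k2"
    and X: "X1 \<in> carrier_mat k1 n" "X2 \<in> carrier_mat k1 n" "X3 \<in> carrier_mat m k2"
      "X4 \<in> carrier_mat m k2" "Y \<in> carrier_mat m n"
    and gm: "gram_mates A B"
    and row_disj: "row_sum A ` {..<k1 + k1} \<inter> row_sum A ` {k1 + k1..<k1 + k1 + m} = {}"
    and col_disj: "col_sum A ` {..<k2 + k2} \<inter> col_sum A ` {k2 + k2..<k2 + k2 + n} = {}"
  shows "isomorphic_mat A B \<longleftrightarrow> fixable_perm X1 X2 X3 X4 Y"
proof -
  have A_carrier: "A \<in> carrier_mat (k1 + k1 + m) (k2 + k2 + n)"
    unfolding A_def using X(1,3) by (rule antidiag_ones_block3_carrier)
  have "isomorphic_mat A B \<longleftrightarrow>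
      (\<exists>\<rho> \<mu>. \<rho> permutes {..<k1 + k1 + m} \<and> \<mu> permutes {..<k2 + k2 + n} \<and> B = permute_mat \<rho> \<mu> A)"
    by (rule isomorphic_mat_iff_permute_mat[OF A_carrier])
  also have "\<dots> \<longleftrightarrow> fixable_perm X1 X2 X3 X4 Y"
  proof
    assume "\<exists>\<rho> \<mu>. \<rho> permutes {..<k1 + k1 + m} \<and> \<mu> permutes {..<k2 + k2 + n} \<and> B = permute_mat \<rho> \<mu> A"
    then obtain \<rho> \<mu> where \<rho>: "\<rho> permutes {..<k1 + k1 + m}" and \<mu>: "\<mu> permutes {..<k2 + k2 + n}"
      and eq: "B = permute_mat \<rho> \<mu> A"
      by blast
    have "\<forall>i<k1 + k1 + m. \<rho> i < k1 + k1 \<longleftrightarrow> i < k1 + k1"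
      using gram_mates_permute_mat_row_less_iff[OF gm eq] \<rho> \<mu> row_disj A_carrier by simp
    moreover have "\<forall>j<k2 + k2 + n. \<mu> j < k2 + k2 \<longleftrightarrow> j < k2 + k2"
      using gram_mates_permute_mat_col_less_iff[OF gm eq] \<rho> \<mu> col_disj A_carrier by simp
    ultimately show "fixable_perm X1 X2 X3 X4 Y"
      using fixable_perm_if_diag_ones_eq_permute[OF k X \<rho> \<mu>] eq unfolding A_def B_def by blast
  next
    assume "fixable_perm X1 X2 X3 X4 Y"
    then show "\<exists>\<rho> \<mu>. \<rho> permutes {..<k1 + k1 + m} \<and> \<mu> permutes {..<k2 + k2 + n} \<and> B = permute_mat \<rho> \<mu> A"
      unfolding A_def B_def by (rule diag_ones_eq_permute_if_fixable_perm[OF X])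
  qed
  finally show ?thesis .
qed

lemma image_lessThan_double_disjoint:
  fixes k :: nat
  assumes "f ` {..<k} \<inter> S = {}" "f ` {k..<2 * k} \<inter> S = {}"
  shows "f ` {..<k + k} \<inter> S = {}"
proof -
  have "{..<k + k} = {..<k} \<union> {k..<2 * k}"
    by auto
  then show ?thesis
    using assms by (simp add: image_Un Int_Un_distrib2)
qed

theorem proposition6p5:
  fixes k1 k2 m n :: nat and X1 X2 X3 X4 Y A B :: "int mat"
  assumes k1: "k1 > 0" and k2: "k2 > 0"
    and X1: "X1 \<in> carrier_mat k1 n" and X2: "X2 \<in> carrier_mat k1 n"
    and X3: "X3 \<in> carrier_mat m k2" and X4: "X4 \<in> carrier_mat m k2"
    and Y: "Y \<in> carrier_mat m n"
    and zo: "zero_one_mat X1" "zero_one_mat X2" "zero_one_mat X3" "zero_one_mat X4"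
            "zero_one_mat Y"
    and A_def: "A = block3 (0\<^sub>m k1 k2) (all_ones_mat k1 k2) X1
                          (all_ones_mat k1 k2) (0\<^sub>m k1 k2) X2
                          X3 X4 Y"
    and B_def: "B = block3 (all_ones_mat k1 k2) (0\<^sub>m k1 k2) X1
                          (0\<^sub>m k1 k2) (all_ones_mat k1 k2) X2
                          X3 X4 Y"
    and gm: "gram_mates A B"
    and colsums: "\<forall>j < n. col_sum X1 j = col_sum X2 j"
    and rowsums: "\<forall>i < m. row_sum X3 i = row_sum X4 i"
    and R_disj: "row_sum A ` {..<k1} \<inter> row_sum A ` {2*k1..<2*k1+m} = {}"
                "row_sum A ` {k1..<2*k1} \<inter> row_sum A ` {2*k1..<2*k1+m} = {}"
    and S_disj: "col_sum A ` {..<k2} \<inter> col_sum A ` {2*k2..<2*k2+n} = {}"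
                "col_sum A ` {k2..<2*k2} \<inter> col_sum A ` {2*k2..<2*k2+n} = {}"
  shows "isomorphic_mat A B \<longleftrightarrow> fixable X1 X2 X3 X4 Y"
proof -
  have A: "A = antidiag_ones_block3 k1 k2 X1 X2 X3 X4 Y" and B: "B = diag_ones_block3 k1 k2 X1 X2 X3 X4 Y"
    by (simp_all add: A_def B_def antidiag_ones_block3_def diag_ones_block3_def)
  have "row_sum A ` {..<k1 + k1} \<inter> row_sum A ` {k1 + k1..<k1 + k1 + m} = {}"
    using image_lessThan_double_disjoint[OF R_disj] by (simp add: mult_2)
  moreover have "col_sum A ` {..<k2 + k2} \<inter> col_sum A ` {k2 + k2..<k2 + k2 + n} = {}"
    using image_lessThan_double_disjoint[OF S_disj] by (simp add: mult_2)
  ultimately have "isomorphic_mat A B \<longleftrightarrow> fixable_perm X1 X2 X3 X4 Y"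
    using isomorphic_antidiag_diag_ones_iff_fixable_perm[OF k1 k2 X1 X2 X3 X4 Y] gm unfolding A B by blast
  then show ?thesis
    using fixable_iff_fixable_perm[OF X1 X2 X3 X4 Y] by simp
qed

end
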